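(* For every integer $n\ge 1$, the Fermat number $F_n=2^{2^{n-1}}+1$ is primover to base $2$.
   Context: For an integer $a>1$ and an odd integer $n>1$ with $\gcd(a,n)=1$: $h_a(n)$ denotes the multiplicative order of $a$ modulo $n$. A cyclotomic coset of $a$ modulo $n$ is a set of the form $\{\, s a^j \bmod n : j\ge 0\,\}$ with $s\in\{1,\dots,n-1\}$; these cosets partition $\{1,\dots,n-1\}$, and $r_a(n)$ denotes the number of distinct cyclotomic cosets of $a$ modulo $n$. An odd composite number $n$ coprime to $a$ is called an overpseudoprime to base $a$ if $n=r_a(n)\,h_a(n)+1$. An integer $N>1$ is called primover to base $a$ if it is either prime or an overpseudoprime to base $a$. *)

theory Defs
  imports "HOL-Number_Theory.Number_Theory"
begin

definition h_ord :: "nat \<Rightarrow> nat \<Rightarrow> nat" where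
  "h_ord a n = ord n a"

definition cyc_coset :: "nat \<Rightarrow> nat \<Rightarrow> nat \<Rightarrow> nat set" where
  "cyc_coset a n s = {(s * a ^ j) mod n | j. True}"

definition r_cos :: "nat \<Rightarrow> nat \<Rightarrow> nat" where
  "r_cos a n = card (cyc_coset a n ` {1..n-1})"

definition overpseudoprime :: "nat \<Rightarrow> nat \<Rightarrow> bool" where
  "overpseudoprime a n \<longleftrightarrow> odd n \<and> n > 1 \<and> \<not> prime n \<and> coprime a n
     \<and> n = r_cos a n * h_ord a n + 1"

definition primover :: "nat \<Rightarrow> nat \<Rightarrow> bool" where
  "primover a N \<longleftrightarrow> N > 1 \<and> (prime N \<or> overpseudoprime a N)"

end

theory Submission
  imports Defs
begin

(* General part: for a coprime to n, the coset of s modulo n is the orbit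
   j |-> s a^j mod n, whose size is the order of a modulo n / gcd(s,n).  The
   cosets of the residues 1..n-1 partition {1..n-1}.  Hence, if a has the same
   order modulo every divisor d > 1 of n, all cosets have size h_a(n) and
   n - 1 = r_a(n) h_a(n).
   Fermat part: every divisor d > 1 of 2^(2^m) + 1 is odd and satisfies
   2^(2^(m+1)) = 1 but 2^(2^m) /= 1 modulo d, so the order of 2 modulo d is
   exactly 2^(m+1), independently of d. *)

lemma cyc_coset_eq_range: "cyc_coset a n s = range (\<lambda>j. s * a ^ j mod n)"
  by (auto simp: cyc_coset_def)

lemma coprime_cofactor:
  fixes a n s :: nat
  assumes "coprime a n"
  shows "coprime (n div gcd s n) a"
  using assms by (metis coprime_commute coprime_mult_left_iff dvd_div_mult_self gcd_dvd2)

(* Two orbit points s a^i, s a^j agree modulo n exactly when i = j modulo the order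
   of a modulo n / gcd(s,n): cancel gcd(s,n), then the unit s / gcd(s,n). *)
lemma coset_elements_eq_iff:
  fixes a n s i j :: nat
  assumes n: "n > 0" and cop: "coprime a n"
  shows "s * a ^ i mod n = s * a ^ j mod n \<longleftrightarrow> [i = j] (mod ord (n div gcd s n) a)"
proof -
  define g where "g = gcd s n"
  define d where "d = n div g"
  define s' where "s' = s div g"
  have g_pos: "g > 0" using n by (simp add: g_def)
  have n_eq: "n = g * d" by (simp add: d_def g_def)
  have s_eq: "s = g * s'" by (simp add: s'_def g_def)
  have s'_cop: "coprime s' d"
    unfolding s'_def d_def g_def using n by (simp add: div_gcd_coprime)
  have d_cop: "coprime d a" using coprime_cofactor[OF cop] by (simp add: d_def g_def)
  have reduce: "s * a ^ k mod n = g * (s' * a ^ k mod d)" for k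
    unfolding s_eq n_eq mult.assoc by (rule mod_mult_mult1)
  have "s * a ^ i mod n = s * a ^ j mod n \<longleftrightarrow> [s' * a ^ i = s' * a ^ j] (mod d)"
    using g_pos by (simp add: reduce cong_def)
  also have "\<dots> \<longleftrightarrow> [a ^ i = a ^ j] (mod d)"
    using s'_cop cong_mult_lcancel_nat cong_scalar_left by blast
  also have "\<dots> \<longleftrightarrow> [i = j] (mod ord d a)"
    using d_cop by (rule order_divides_expdiff)
  finally show ?thesis by (simp add: d_def g_def)
qed

(* Hence the orbit map is injective on one period, and the coset size is that order. *)
lemma card_cyc_coset:
  fixes a n s :: nat
  assumes n: "n > 0" and cop: "coprime a n"
  shows "card (cyc_coset a n s) = ord (n div gcd s n) a"
proof -
  define k where "k = ord (n div gcd s n) a"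
  define f where "f j = s * a ^ j mod n" for j
  have k_pos: "k > 0" using coprime_cofactor[OF cop] by (simp add: k_def)
  have f_eq: "f i = f j \<longleftrightarrow> [i = j] (mod k)" for i j
    unfolding f_def k_def using n cop by (rule coset_elements_eq_iff)
  have "range f = f ` {..<k}"
  proof
    show "range f \<subseteq> f ` {..<k}"
    proof
      fix x assume "x \<in> range f"
      then obtain j where x: "x = f j" by blast
      have "f j = f (j mod k)" using f_eq by (simp add: cong_def)
      thus "x \<in> f ` {..<k}" using x k_pos by auto
    qed
  qed auto
  moreover have "inj_on f {..<k}"
    using f_eq cong_less_modulus_unique_nat by (auto simp: inj_on_def)
  ultimately show ?thesis
    by (simp add: cyc_coset_eq_range f_def[abs_def] card_image k_def)
qed

lemma cyc_coset_subset:
  fixes a n s :: nat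
  assumes cop: "coprime a n" and s: "s \<in> {1..n-1}"
  shows "cyc_coset a n s \<subseteq> {1..n-1}"
proof
  fix x assume "x \<in> cyc_coset a n s"
  then obtain j where x: "x = s * a ^ j mod n" by (auto simp: cyc_coset_def)
  have "\<not> n dvd s" using s by (auto dest: dvd_imp_le)
  moreover have "coprime n (a ^ j)" using cop by (simp add: coprime_commute)
  ultimately have "\<not> n dvd s * a ^ j" by (simp add: coprime_dvd_mult_left_iff)
  hence "x \<noteq> 0" using x by (simp add: mod_eq_0_iff_dvd)
  moreover have "n > 0" using s by (cases n) auto
  hence "x < n" using x by simp
  ultimately show "x \<in> {1..n-1}" by simp
qed

lemma cyc_coset_self: "s < n \<Longrightarrow> s \<in> cyc_coset a n s"
  by (auto simp: cyc_coset_def intro: exI[of _ 0])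

(* Any member of a coset generates the same coset (powers of a can be undone modulo
   the period); this makes distinct cosets disjoint. *)
lemma cyc_coset_of_member:
  fixes a n s x :: nat
  assumes n: "n > 0" and cop: "coprime a n" and x: "x \<in> cyc_coset a n s"
  shows "cyc_coset a n x = cyc_coset a n s"
proof -
  obtain i where x_eq: "x = s * a ^ i mod n" using x by (auto simp: cyc_coset_def)
  have shift: "x * a ^ j mod n = s * a ^ (i + j) mod n" for j
    unfolding x_eq by (simp add: mod_mult_left_eq power_add mult.assoc)
  define k where "k = ord (n div gcd s n) a"
  have "k > 0" using coprime_cofactor[OF cop] by (simp add: k_def)
  have unshift: "s * a ^ j mod n = x * a ^ (j + k * i - i) mod n" for j
  proof -
    have "i \<le> k * i" using \<open>k > 0\<close> by simp
    hence "i + (j + k * i - i) = j + k * i" by linarith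
    hence "[i + (j + k * i - i) = j] (mod k)" by (simp add: cong_def)
    thus ?thesis unfolding shift k_def using coset_elements_eq_iff[OF n cop] by metis
  qed
  have "range (\<lambda>j. x * a ^ j mod n) \<subseteq> range (\<lambda>j. s * a ^ j mod n)"
    unfolding image_subset_iff using shift by (metis rangeI)
  moreover have "range (\<lambda>j. s * a ^ j mod n) \<subseteq> range (\<lambda>j. x * a ^ j mod n)"
    unfolding image_subset_iff using unshift by (metis rangeI)
  ultimately show ?thesis unfolding cyc_coset_eq_range by (rule subset_antisym)
qed

(* The cosets partition {1..n-1}; if all have the same size c, then n - 1 = r_a(n) c. *)
lemma residue_count_by_cosets:
  fixes a n c :: nat
  assumes n: "n > 0" and cop: "coprime a n"
    and uniform: "\<And>s. s \<in> {1..n-1} \<Longrightarrow> card (cyc_coset a n s) = c"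
  shows "n - 1 = r_cos a n * c"
proof -
  define C where "C = cyc_coset a n ` {1..n-1}"
  have covers: "\<Union>C = {1..n-1}"
  proof
    show "\<Union>C \<subseteq> {1..n-1}" unfolding C_def using cyc_coset_subset[OF cop] by (rule UN_least)
    show "{1..n-1} \<subseteq> \<Union>C"
    proof
      fix s assume s: "s \<in> {1..n-1}"
      hence "s \<in> cyc_coset a n s" using n by (intro cyc_coset_self) auto
      with s show "s \<in> \<Union>C" unfolding C_def by blast
    qed
  qed
  have disjoint: "c1 \<inter> c2 = {}" if "c1 \<in> C" "c2 \<in> C" "c1 \<noteq> c2" for c1 c2
  proof (rule ccontr)
    assume "c1 \<inter> c2 \<noteq> {}"
    then obtain x where "x \<in> c1" "x \<in> c2" by blast
    hence "c1 = cyc_coset a n x" "c2 = cyc_coset a n x"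
      using that(1,2) cyc_coset_of_member[OF n cop] unfolding C_def by auto
    with that(3) show False by simp
  qed
  have "c * card C = card (\<Union>C)"
  proof (rule card_partition)
    show "finite C" by (simp add: C_def)
    show "finite (\<Union>C)" using covers by simp
    show "card B = c" if "B \<in> C" for B using that uniform by (auto simp: C_def)
  qed (rule disjoint)
  thus ?thesis using covers by (simp add: r_cos_def C_def mult.commute)
qed

(* General criterion: if a has the same order modulo n and modulo each divisor d > 1
   of n, then every coset has size h_a(n), so n = r_a(n) h_a(n) + 1. *)
lemma cyclotomic_identity:
  fixes a n :: nat
  assumes n: "n > 1" and cop: "coprime a n"
    and ord_divisors: "\<And>d. d dvd n \<Longrightarrow> d > 1 \<Longrightarrow> ord d a = ord n a"
  shows "n = r_cos a n * h_ord a n + 1"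
proof -
  have "card (cyc_coset a n s) = ord n a" if s: "s \<in> {1..n-1}" for s
  proof -
    have "gcd s n \<le> s" using s by simp
    moreover have "s < n" using s n by auto
    ultimately have gcd_less: "gcd s n < n" by linarith
    have n_eq: "n = gcd s n * (n div gcd s n)" by simp
    have "n div gcd s n \<noteq> 0" using n_eq n by (metis mult_0_right not_one_less_zero)
    moreover have "n div gcd s n \<noteq> 1" using n_eq gcd_less by (metis mult_1_right less_irrefl)
    ultimately have "n div gcd s n > 1" by linarith
    moreover have "n div gcd s n dvd n" using n_eq by (metis dvd_triv_right)
    ultimately have "ord (n div gcd s n) a = ord n a" by (rule ord_divisors[rotated])
    with card_cyc_coset[OF _ cop] n show ?thesis by simp
  qed
  hence "n - 1 = r_cos a n * ord n a" using n cop by (intro residue_count_by_cosets) auto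
  with n show ?thesis by (simp add: h_ord_def)
qed

lemma ord_eq_prime_power:
  fixes a n p k :: nat
  assumes p: "prime p"
    and top: "[a ^ (p ^ Suc k) = 1] (mod n)"
    and below: "\<not> [a ^ (p ^ k) = 1] (mod n)"
  shows "ord n a = p ^ Suc k"
proof -
  have "ord n a dvd p ^ Suc k" using top ord_divides by blast
  then obtain i where i: "i \<le> Suc k" "ord n a = p ^ i"
    using divides_primepow_nat[OF p] by blast
  have "\<not> ord n a dvd p ^ k" using below ord_divides by blast
  hence "\<not> i \<le> k" using i(2) le_imp_power_dvd by metis
  with i have "i = Suc k" by simp
  with i(2) show ?thesis by simp
qed

(* Every divisor d > 1 of 2^(2^m) + 1 sees 2 with order exactly 2^(m+1): from
   2^(2^m) = -1 we get 2^(2^(m+1)) = 1, and 2^(2^m) = 1 would force d | 2,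
   impossible as d is odd. *)
lemma ord_two_mod_fermat_divisor:
  fixes m d :: nat
  assumes d: "d dvd 2 ^ 2 ^ m + 1" "d > 1"
  shows "ord d 2 = 2 ^ Suc m"
proof (rule ord_eq_prime_power)
  define x :: nat where "x = 2 ^ 2 ^ m"
  have x_pos: "x \<ge> 1" by (simp add: x_def)
  have d_dvd: "d dvd x + 1" using d(1) by (simp add: x_def)
  have "odd (x + 1)" by (simp add: x_def)
  hence d_odd: "odd d" using d_dvd dvd_trans by blast
  show "prime (2::nat)" by simp
  have "x ^ 2 - 1 = (x + 1) * (x - 1)" using x_pos
    by (simp add: power2_eq_square algebra_simps)
  moreover have "d dvd (x + 1) * (x - 1)" using d_dvd by (rule dvd_mult2)
  ultimately have "[x ^ 2 = 1] (mod d)" using x_pos by (simp add: cong_altdef_nat)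
  moreover have "(2::nat) ^ 2 ^ Suc m = x ^ 2"
    unfolding x_def by (metis power_Suc power_mult mult.commute)
  ultimately show "[2 ^ 2 ^ Suc m = 1] (mod d)" by simp
  show "\<not> [2 ^ 2 ^ m = 1] (mod d)"
  proof
    assume "[2 ^ 2 ^ m = 1] (mod d)"
    hence "d dvd x - 1" using x_pos by (simp add: x_def cong_altdef_nat)
    hence "d dvd (x + 1) - (x - 1)" using d_dvd dvd_diff_nat by blast
    moreover have "(x + 1) - (x - 1) = 2" using x_pos by simp
    ultimately have "d \<le> 2" by (simp add: dvd_imp_le)
    with d(2) d_odd show False by presburger
  qed
qed

lemma fermat_number_cyclotomic_identity:
  fixes m :: nat
  defines "F \<equiv> 2 ^ 2 ^ m + 1"
  shows "F = r_cos 2 F * h_ord 2 F + 1"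
proof (rule cyclotomic_identity)
  show "F > 1" "coprime 2 F" by (simp_all add: F_def)
  have "ord F 2 = 2 ^ Suc m" using ord_two_mod_fermat_divisor[of F m] by (simp add: F_def)
  thus "ord d 2 = ord F 2" if "d dvd F" "d > 1" for d
    using ord_two_mod_fermat_divisor[of d m] that by (simp add: F_def)
qed

theorem theorem4:
  fixes n :: nat
  assumes "n \<ge> 1"
  shows "primover 2 (2 ^ (2 ^ (n - 1)) + 1)"
proof -
  define F :: nat where "F = 2 ^ (2 ^ (n - 1)) + 1"
  have F_gt_1: "F > 1" and F_odd: "odd F" by (simp_all add: F_def)
  have "F = r_cos 2 F * h_ord 2 F + 1"
    unfolding F_def by (rule fermat_number_cyclotomic_identity)
  with F_gt_1 F_odd have "prime F \<or> overpseudoprime 2 F"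
    by (auto simp: overpseudoprime_def)
  with F_gt_1 show ?thesis by (simp add: primover_def F_def)
qed

end
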